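(* Let $f:X\to Y$ be a morphism in $\mathcal A$. The following are equivalent: (1) $\overline f$ is a monomorphism in $\underline{\mathcal A}$; (2) for every morphism $p:T\to Y$ with $T\in\mathcal T$, if $Z$ is the pullback of $f$ and $p$ with projections $g:Z\to X$ and $h:Z\to T$, then $g$ factors through an object of $\mathcal T$. If moreover $\mathcal T$ is contravariantly finite in $\mathcal A$, then (1) and (2) are also equivalent to: (3) for some $\mathcal T$-precover $p_Y:T_Y\to Y$, the projection $g:Z\to X$ from the pullback $Z$ of $f$ and $p_Y$ factors through an object of $\mathcal T$; (4) in the left triangulated category $\underline{\mathcal A}$ there is a left triangle of the form $\Omega Y\to Z\xrightarrow{\overline 0}X\xrightarrow{\overline f}Y$.
   Context: $\mathcal A$ is an abelian category and $\mathcal T$ is a full additive subcategory of $\mathcal A$ closed under finite direct sums and direct summands. $\langle\mathcal T\rangle$ is the ideal of morphisms of $\mathcal A$ that factor through an object of $\mathcal T$; the stable category $\underline{\mathcal A}=\mathcal A/\langle\mathcal T\rangle$ has the same objects as $\mathcal A$ and $\underline{\mathcal A}(X,Y)=\mathcal A(X,Y)/\langle\mathcal T\rangle(X,Y)$; $\overline f$ denotes the class of $f$ in $\underline{\mathcal A}$. When $\mathcal T$ is contravariantly finite, $\underline{\mathcal A}$ carries the (Beligiannis–Marmaridis) left triangulated structure: the loop functor is $\Omega Y=\ker(p_Y)$ for a $\mathcal T$-precover $p_Y:T_Y\to Y$; for $f:X\to Y$ one forms the pullback $Z$ of $f$ and $p_Y$ with projections $g:Z\to X$, $h:Z\to T_Y$,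 and the morphism $\Omega Y\to Z$ induced by the inclusion $\ker(p_Y)\to T_Y$ and $0:\ker(p_Y)\to X$; the left triangles are the diagrams in $\underline{\mathcal A}$ isomorphic to $\Omega Y\to Z\xrightarrow{\overline g}X\xrightarrow{\overline f}Y$ obtained in this way. *)

theory Defs
  imports Main
begin

text \<open>A (small or large) category presented by an object set, hom-sets of untyped
morphisms, composition (c_comp C g f means g after f), identities, and the
additive structure on hom-sets (c_add, c_zero X Y, c_neg).\<close>

record ('o, 'm) addcat =
  c_ob   :: "'o set"
  c_hom  :: "'o \<Rightarrow> 'o \<Rightarrow> 'm set"
  c_comp :: "'m \<Rightarrow> 'm \<Rightarrow> 'm"
  c_id   :: "'o \<Rightarrow> 'm"
  c_add  :: "'m \<Rightarrow> 'm \<Rightarrow> 'm"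
  c_zero :: "'o \<Rightarrow> 'o \<Rightarrow> 'm"
  c_neg  :: "'m \<Rightarrow> 'm"

definition is_category :: "('o, 'm) addcat \<Rightarrow> bool" where
  "is_category C \<longleftrightarrow>
     (\<forall>X Y. c_hom C X Y \<noteq> {} \<longrightarrow> X \<in> c_ob C \<and> Y \<in> c_ob C) \<and>
     (\<forall>X \<in> c_ob C. c_id C X \<in> c_hom C X X) \<and>
     (\<forall>X Y Z f g. f \<in> c_hom C X Y \<and> g \<in> c_hom C Y Z \<longrightarrow> c_comp C g f \<in> c_hom C X Z) \<and>
     (\<forall>W X Y Z f g h. f \<in> c_hom C W X \<and> g \<in> c_hom C X Y \<and> h \<in> c_hom C Y Z \<longrightarrow>
         c_comp C h (c_comp C g f) = c_comp C (c_comp C h g) f) \<and>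
     (\<forall>X Y f. f \<in> c_hom C X Y \<longrightarrow> c_comp C (c_id C Y) f = f \<and> c_comp C f (c_id C X) = f)"

definition is_preadditive :: "('o, 'm) addcat \<Rightarrow> bool" where
  "is_preadditive C \<longleftrightarrow> is_category C \<and>
     (\<forall>X \<in> c_ob C. \<forall>Y \<in> c_ob C.
        c_zero C X Y \<in> c_hom C X Y \<and>
        (\<forall>f \<in> c_hom C X Y. \<forall>g \<in> c_hom C X Y.
            c_add C f g \<in> c_hom C X Y \<and> c_add C f g = c_add C g f) \<and>
        (\<forall>f \<in> c_hom C X Y. \<forall>g \<in> c_hom C X Y. \<forall>h \<in> c_hom C X Y.
            c_add C (c_add C f g) h = c_add C f (c_add C g h)) \<and>
        (\<forall>f \<in> c_hom C X Y. c_add C f (c_zero C X Y) = f \<and>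
            c_neg C f \<in> c_hom C X Y \<and> c_add C f (c_neg C f) = c_zero C X Y)) \<and>
     (\<forall>X Y Z f g h. f \<in> c_hom C X Y \<and> g \<in> c_hom C X Y \<and> h \<in> c_hom C Y Z \<longrightarrow>
         c_comp C h (c_add C f g) = c_add C (c_comp C h f) (c_comp C h g)) \<and>
     (\<forall>X Y Z f g h. f \<in> c_hom C X Y \<and> g \<in> c_hom C Y Z \<and> h \<in> c_hom C Y Z \<longrightarrow>
         c_comp C (c_add C g h) f = c_add C (c_comp C g f) (c_comp C h f))"

definition is_zero_obj :: "('o, 'm) addcat \<Rightarrow> 'o \<Rightarrow> bool" where
  "is_zero_obj C N \<longleftrightarrow> N \<in> c_ob C \<and>
     (\<forall>X \<in> c_ob C. (\<exists>!u. u \<in> c_hom C N X) \<and> (\<exists>!u. u \<in> c_hom C X N))"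

definition is_biproduct :: "('o, 'm) addcat \<Rightarrow> 'o \<Rightarrow> 'o \<Rightarrow> 'o \<Rightarrow> bool" where
  "is_biproduct C X Y S \<longleftrightarrow> X \<in> c_ob C \<and> Y \<in> c_ob C \<and> S \<in> c_ob C \<and>
     (\<exists>i1 i2 p1 p2. i1 \<in> c_hom C X S \<and> i2 \<in> c_hom C Y S \<and>
        p1 \<in> c_hom C S X \<and> p2 \<in> c_hom C S Y \<and>
        c_comp C p1 i1 = c_id C X \<and> c_comp C p2 i2 = c_id C Y \<and>
        c_comp C p1 i2 = c_zero C Y X \<and> c_comp C p2 i1 = c_zero C X Y \<and>
        c_add C (c_comp C i1 p1) (c_comp C i2 p2) = c_id C S)"

definition is_kernel :: "('o, 'm) addcat \<Rightarrow> 'o \<Rightarrow> 'o \<Rightarrow> 'm \<Rightarrow> 'o \<Rightarrow> 'm \<Rightarrow> bool" where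
  "is_kernel C X Y f K k \<longleftrightarrow> f \<in> c_hom C X Y \<and> K \<in> c_ob C \<and> k \<in> c_hom C K X \<and>
     c_comp C f k = c_zero C K Y \<and>
     (\<forall>W \<in> c_ob C. \<forall>u \<in> c_hom C W X. c_comp C f u = c_zero C W Y \<longrightarrow>
        (\<exists>!v. v \<in> c_hom C W K \<and> c_comp C k v = u))"

definition is_cokernel :: "('o, 'm) addcat \<Rightarrow> 'o \<Rightarrow> 'o \<Rightarrow> 'm \<Rightarrow> 'o \<Rightarrow> 'm \<Rightarrow> bool" where
  "is_cokernel C X Y f Q q \<longleftrightarrow> f \<in> c_hom C X Y \<and> Q \<in> c_ob C \<and> q \<in> c_hom C Y Q \<and>
     c_comp C q f = c_zero C X Q \<and>
     (\<forall>W \<in> c_ob C. \<forall>u \<in> c_hom C Y W. c_comp C u f = c_zero C X W \<longrightarrow>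
        (\<exists>!v. v \<in> c_hom C Q W \<and> c_comp C v q = u))"

definition is_mono :: "('o, 'm) addcat \<Rightarrow> 'o \<Rightarrow> 'o \<Rightarrow> 'm \<Rightarrow> bool" where
  "is_mono C X Y f \<longleftrightarrow> f \<in> c_hom C X Y \<and>
     (\<forall>W \<in> c_ob C. \<forall>u \<in> c_hom C W X. \<forall>v \<in> c_hom C W X.
        c_comp C f u = c_comp C f v \<longrightarrow> u = v)"

definition is_epi :: "('o, 'm) addcat \<Rightarrow> 'o \<Rightarrow> 'o \<Rightarrow> 'm \<Rightarrow> bool" where
  "is_epi C X Y f \<longleftrightarrow> f \<in> c_hom C X Y \<and>
     (\<forall>W \<in> c_ob C. \<forall>u \<in> c_hom C Y W. \<forall>v \<in> c_hom C Y W.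
        c_comp C u f = c_comp C v f \<longrightarrow> u = v)"

definition is_abelian :: "('o, 'm) addcat \<Rightarrow> bool" where
  "is_abelian C \<longleftrightarrow> is_preadditive C \<and>
     (\<exists>N. is_zero_obj C N) \<and>
     (\<forall>X \<in> c_ob C. \<forall>Y \<in> c_ob C. \<exists>S. is_biproduct C X Y S) \<and>
     (\<forall>X Y f. f \<in> c_hom C X Y \<longrightarrow> (\<exists>K k. is_kernel C X Y f K k)) \<and>
     (\<forall>X Y f. f \<in> c_hom C X Y \<longrightarrow> (\<exists>Q q. is_cokernel C X Y f Q q)) \<and>
     (\<forall>X Y f. is_mono C X Y f \<longrightarrow> (\<exists>Z g. is_kernel C Y Z g X f)) \<and>
     (\<forall>X Y f. is_epi C X Y f \<longrightarrow> (\<exists>W g. is_cokernel C W X g Y f))"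

definition good_subcat :: "('o, 'm) addcat \<Rightarrow> 'o set \<Rightarrow> bool" where
  "good_subcat C TT \<longleftrightarrow> TT \<subseteq> c_ob C \<and>
     (\<exists>N \<in> TT. is_zero_obj C N) \<and>
     (\<forall>X Y S. is_biproduct C X Y S \<longrightarrow> X \<in> TT \<longrightarrow> Y \<in> TT \<longrightarrow> S \<in> TT) \<and>
     (\<forall>X Y S. is_biproduct C X Y S \<longrightarrow> S \<in> TT \<longrightarrow> X \<in> TT)"

definition factors_through :: "('o, 'm) addcat \<Rightarrow> 'o set \<Rightarrow> 'o \<Rightarrow> 'o \<Rightarrow> 'm \<Rightarrow> bool" where
  "factors_through C TT X Y f \<longleftrightarrow> f \<in> c_hom C X Y \<and>
     (\<exists>T \<in> TT. \<exists>a \<in> c_hom C X T. \<exists>b \<in> c_hom C T Y. f = c_comp C b a)"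

text \<open>Equality of classes in the stable category A / <TT>.\<close>
definition st_eq :: "('o, 'm) addcat \<Rightarrow> 'o set \<Rightarrow> 'o \<Rightarrow> 'o \<Rightarrow> 'm \<Rightarrow> 'm \<Rightarrow> bool" where
  "st_eq C TT X Y f g \<longleftrightarrow> f \<in> c_hom C X Y \<and> g \<in> c_hom C X Y \<and>
     factors_through C TT X Y (c_add C f (c_neg C g))"

definition stable_mono :: "('o, 'm) addcat \<Rightarrow> 'o set \<Rightarrow> 'o \<Rightarrow> 'o \<Rightarrow> 'm \<Rightarrow> bool" where
  "stable_mono C TT X Y f \<longleftrightarrow> f \<in> c_hom C X Y \<and>
     (\<forall>W \<in> c_ob C. \<forall>u \<in> c_hom C W X. \<forall>v \<in> c_hom C W X.
        st_eq C TT W Y (c_comp C f u) (c_comp C f v) \<longrightarrow> st_eq C TT W X u v)"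

definition stable_iso :: "('o, 'm) addcat \<Rightarrow> 'o set \<Rightarrow> 'o \<Rightarrow> 'o \<Rightarrow> 'm \<Rightarrow> bool" where
  "stable_iso C TT A B a \<longleftrightarrow> a \<in> c_hom C A B \<and>
     (\<exists>b \<in> c_hom C B A. st_eq C TT A A (c_comp C b a) (c_id C A) \<and>
                         st_eq C TT B B (c_comp C a b) (c_id C B))"

definition is_pullback ::
  "('o, 'm) addcat \<Rightarrow> 'o \<Rightarrow> 'o \<Rightarrow> 'o \<Rightarrow> 'm \<Rightarrow> 'm \<Rightarrow> 'o \<Rightarrow> 'm \<Rightarrow> 'm \<Rightarrow> bool" where
  "is_pullback C X Y T f p Z g h \<longleftrightarrow>
     f \<in> c_hom C X Y \<and> p \<in> c_hom C T Y \<and> Z \<in> c_ob C \<and>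
     g \<in> c_hom C Z X \<and> h \<in> c_hom C Z T \<and> c_comp C f g = c_comp C p h \<and>
     (\<forall>W \<in> c_ob C. \<forall>a \<in> c_hom C W X. \<forall>b \<in> c_hom C W T.
        c_comp C f a = c_comp C p b \<longrightarrow>
        (\<exists>!u. u \<in> c_hom C W Z \<and> c_comp C g u = a \<and> c_comp C h u = b))"

definition is_precover :: "('o, 'm) addcat \<Rightarrow> 'o set \<Rightarrow> 'o \<Rightarrow> 'o \<Rightarrow> 'm \<Rightarrow> bool" where
  "is_precover C TT Y TY p \<longleftrightarrow> TY \<in> TT \<and> p \<in> c_hom C TY Y \<and>
     (\<forall>T \<in> TT. \<forall>q \<in> c_hom C T Y. \<exists>r \<in> c_hom C T TY. c_comp C p r = q)"

definition contravariantly_finite :: "('o, 'm) addcat \<Rightarrow> 'o set \<Rightarrow> bool" where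
  "contravariantly_finite C TT \<longleftrightarrow> (\<forall>Y \<in> c_ob C. \<exists>TY p. is_precover C TT Y TY p)"

text \<open>Standard left triangle  \<Omega>Y \<rightarrow> Z \<rightarrow> X \<rightarrow> Y  built from f : X \<rightarrow> Y:
\<Omega>Y = K is the kernel (k : K \<rightarrow> TY) of a precover p : TY \<rightarrow> Y, Z is the pullback of f and p
with projections g, h, and u : K \<rightarrow> Z is induced by k and 0 : K \<rightarrow> X.\<close>
definition std_left_triangle ::
  "('o, 'm) addcat \<Rightarrow> 'o set \<Rightarrow> 'o \<Rightarrow> 'o \<Rightarrow> 'o \<Rightarrow> 'o \<Rightarrow> 'm \<Rightarrow> 'm \<Rightarrow> 'm \<Rightarrow> bool" where
  "std_left_triangle C TT K Z X Y u g f \<longleftrightarrow>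
     (\<exists>TY p k h. is_precover C TT Y TY p \<and> is_kernel C TY Y p K k \<and>
        is_pullback C X Y TY f p Z g h \<and>
        u \<in> c_hom C K Z \<and> c_comp C g u = c_zero C K X \<and> c_comp C h u = k)"

definition left_triangle ::
  "('o, 'm) addcat \<Rightarrow> 'o set \<Rightarrow> 'o \<Rightarrow> 'o \<Rightarrow> 'o \<Rightarrow> 'o \<Rightarrow> 'm \<Rightarrow> 'm \<Rightarrow> 'm \<Rightarrow> bool" where
  "left_triangle C TT A B D E a b c \<longleftrightarrow>
     a \<in> c_hom C A B \<and> b \<in> c_hom C B D \<and> c \<in> c_hom C D E \<and>
     (\<exists>K Z X Y u g f a1 a2 a3 a4.
        std_left_triangle C TT K Z X Y u g f \<and>
        stable_iso C TT A K a1 \<and> stable_iso C TT B Z a2 \<and>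
        stable_iso C TT D X a3 \<and> stable_iso C TT E Y a4 \<and>
        st_eq C TT A Z (c_comp C u a1) (c_comp C a2 a) \<and>
        st_eq C TT B X (c_comp C g a2) (c_comp C a3 b) \<and>
        st_eq C TT D Y (c_comp C f a3) (c_comp C a4 c))"

end

theory Submission
  imports Defs
begin

text \<open>
Since the ideal generated by TT is closed under sums and negatives, the class of f is a
monomorphism in the stable category iff f \<cdot> d factoring through TT forces d to factor through
TT. Now f \<cdot> d = b \<cdot> a with b : T \<rightarrow> Y, T \<in> TT, says exactly that d lifts to the pullback of
f along b, so this holds iff all pullback projections g onto X factor through TT; given a
precover p : TY \<rightarrow> Y every such b factors through p, so the single pullback along p suffices.
Finally, in a left triangle with second morphism 0 the isomorphism to a standard triangle forces
the projection g of the latter to be stably zero; conversely, for a stable monomorphism the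
standard triangle itself has g stably equal to 0.
\<close>

locale preadditive_category =
  fixes C :: "('o, 'm) addcat"
  assumes preadditive: "is_preadditive C"
begin

abbreviation Ob where "Ob \<equiv> c_ob C"
abbreviation hom where "hom \<equiv> c_hom C"
abbreviation ident where "ident \<equiv> c_id C"
abbreviation zero where "zero \<equiv> c_zero C"
abbreviation comp (infixr "\<cdot>" 70) where "g \<cdot> f \<equiv> c_comp C g f"
abbreviation add (infixl "\<oplus>" 65) where "f \<oplus> g \<equiv> c_add C f g"
abbreviation neg ("\<ominus> _" [80] 80) where "\<ominus> f \<equiv> c_neg C f"

lemma category: "is_category C"
  using preadditive unfolding is_preadditive_def by blast

lemma hom_objects: "f \<in> hom X Y \<Longrightarrow> X \<in> Ob \<and> Y \<in> Ob"
  using category unfolding is_category_def by blast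

lemma ident_hom: "X \<in> Ob \<Longrightarrow> ident X \<in> hom X X"
  using category unfolding is_category_def by blast

lemma comp_hom [intro]: "f \<in> hom X Y \<Longrightarrow> g \<in> hom Y Z \<Longrightarrow> g \<cdot> f \<in> hom X Z"
  using category unfolding is_category_def by blast

lemma comp_assoc:
  "f \<in> hom W X \<Longrightarrow> g \<in> hom X Y \<Longrightarrow> h \<in> hom Y Z \<Longrightarrow> (h \<cdot> g) \<cdot> f = h \<cdot> g \<cdot> f"
  using category unfolding is_category_def by metis

lemma ident_left: "f \<in> hom X Y \<Longrightarrow> ident Y \<cdot> f = f"
  using category unfolding is_category_def by blast

lemma ident_right: "f \<in> hom X Y \<Longrightarrow> f \<cdot> ident X = f"
  using category unfolding is_category_def by blast

lemma hom_abelian_group: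
  assumes "X \<in> Ob" and "Y \<in> Ob"
  shows "zero X Y \<in> hom X Y \<and>
     (\<forall>f \<in> hom X Y. \<forall>g \<in> hom X Y. f \<oplus> g \<in> hom X Y \<and> f \<oplus> g = g \<oplus> f) \<and>
     (\<forall>f \<in> hom X Y. \<forall>g \<in> hom X Y. \<forall>h \<in> hom X Y. f \<oplus> g \<oplus> h = f \<oplus> (g \<oplus> h)) \<and>
     (\<forall>f \<in> hom X Y. f \<oplus> zero X Y = f \<and> \<ominus> f \<in> hom X Y \<and> f \<oplus> \<ominus> f = zero X Y)"
  using preadditive assms unfolding is_preadditive_def
  by (elim conjE) (drule (1) bspec, drule (1) bspec, assumption)

lemma zero_hom [intro]: "X \<in> Ob \<Longrightarrow> Y \<in> Ob \<Longrightarrow> zero X Y \<in> hom X Y"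
  using hom_abelian_group by blast

lemma add_hom [intro]: "f \<in> hom X Y \<Longrightarrow> g \<in> hom X Y \<Longrightarrow> f \<oplus> g \<in> hom X Y"
  using hom_abelian_group hom_objects by blast

lemma neg_hom [intro]: "f \<in> hom X Y \<Longrightarrow> \<ominus> f \<in> hom X Y"
  using hom_abelian_group hom_objects by blast

lemma add_commute: "f \<in> hom X Y \<Longrightarrow> g \<in> hom X Y \<Longrightarrow> f \<oplus> g = g \<oplus> f"
  using hom_abelian_group hom_objects by blast

lemma add_assoc:
  "f \<in> hom X Y \<Longrightarrow> g \<in> hom X Y \<Longrightarrow> h \<in> hom X Y \<Longrightarrow> f \<oplus> g \<oplus> h = f \<oplus> (g \<oplus> h)"
  using hom_abelian_group hom_objects by blast

lemma add_zero: "f \<in> hom X Y \<Longrightarrow> f \<oplus> zero X Y = f"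
  using hom_abelian_group hom_objects by blast

lemma add_neg: "f \<in> hom X Y \<Longrightarrow> f \<oplus> \<ominus> f = zero X Y"
  using hom_abelian_group hom_objects by blast

lemma comp_add_left:
  "f \<in> hom X Y \<Longrightarrow> g \<in> hom X Y \<Longrightarrow> h \<in> hom Y Z \<Longrightarrow> h \<cdot> (f \<oplus> g) = h \<cdot> f \<oplus> h \<cdot> g"
  using preadditive unfolding is_preadditive_def by (elim conjE allE impE) auto

lemma comp_add_right:
  "f \<in> hom X Y \<Longrightarrow> g \<in> hom Y Z \<Longrightarrow> h \<in> hom Y Z \<Longrightarrow> (g \<oplus> h) \<cdot> f = g \<cdot> f \<oplus> h \<cdot> f"
  using preadditive unfolding is_preadditive_def by (elim conjE allE impE) auto

lemma zero_add: "f \<in> hom X Y \<Longrightarrow> zero X Y \<oplus> f = f"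
  using add_commute[of f X Y "zero X Y"] add_zero[of f X Y] zero_hom hom_objects[of f X Y] by simp

lemma neg_add: "f \<in> hom X Y \<Longrightarrow> \<ominus> f \<oplus> f = zero X Y"
  using add_commute[of f X Y "\<ominus> f"] add_neg[of f X Y] neg_hom[of f X Y] by simp

lemma add_right_cancel:
  assumes f: "f \<in> hom X Y" and g: "g \<in> hom X Y" and h: "h \<in> hom X Y" and eq: "f \<oplus> h = g \<oplus> h"
  shows "f = g"
proof -
  have "f = (f \<oplus> h) \<oplus> \<ominus> h"
    using add_assoc[OF f h neg_hom[OF h]] add_neg[OF h] add_zero[OF f] by simp
  also have "\<dots> = g" using eq add_assoc[OF g h neg_hom[OF h]] add_neg[OF h] add_zero[OF g] by simp
  finally show ?thesis .
qed

lemma neg_unique: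
  assumes f: "f \<in> hom X Y" and g: "g \<in> hom X Y" and sum: "f \<oplus> g = zero X Y"
  shows "g = \<ominus> f"
proof -
  have "g = (\<ominus> f \<oplus> f) \<oplus> g" using neg_add[OF f] zero_add[OF g] by simp
  also have "\<dots> = \<ominus> f" using sum add_assoc[OF neg_hom[OF f] f g] add_zero[OF neg_hom[OF f]] by simp
  finally show ?thesis .
qed

lemma neg_neg: "f \<in> hom X Y \<Longrightarrow> \<ominus> \<ominus> f = f"
  by (rule sym, rule neg_unique) (auto intro: neg_add)

lemma neg_zero: "X \<in> Ob \<Longrightarrow> Y \<in> Ob \<Longrightarrow> \<ominus> zero X Y = zero X Y"
  by (rule sym, rule neg_unique) (auto intro: add_zero)

lemma neg_add_distrib:
  assumes f: "f \<in> hom X Y" and g: "g \<in> hom X Y"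
  shows "\<ominus> (f \<oplus> g) = \<ominus> f \<oplus> \<ominus> g"
proof -
  have nf: "\<ominus> f \<in> hom X Y" and ng: "\<ominus> g \<in> hom X Y" using f g by blast+
  have "(f \<oplus> g) \<oplus> (\<ominus> f \<oplus> \<ominus> g) = f \<oplus> (g \<oplus> (\<ominus> g \<oplus> \<ominus> f))"
    by (subst add_commute[OF nf ng]) (rule add_assoc[OF f g add_hom[OF ng nf]])
  also have "\<dots> = f \<oplus> ((g \<oplus> \<ominus> g) \<oplus> \<ominus> f)" using add_assoc[OF g ng nf] by simp
  also have "\<dots> = zero X Y" using add_neg[OF g] zero_add[OF nf] add_neg[OF f] by simp
  finally have "\<ominus> f \<oplus> \<ominus> g = \<ominus> (f \<oplus> g)" by (rule neg_unique[OF add_hom[OF f g] add_hom[OF nf ng]])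
  then show ?thesis by (rule sym)
qed

lemma diff_eq_zero_imp_eq:
  assumes f: "f \<in> hom X Y" and g: "g \<in> hom X Y" and "f \<oplus> \<ominus> g = zero X Y"
  shows "f = g"
proof -
  have "\<ominus> g = \<ominus> f" using neg_unique[OF f neg_hom[OF g]] assms(3) .
  then show ?thesis using neg_neg[OF f] neg_neg[OF g] by metis
qed

lemma comp_zero:
  assumes h: "h \<in> hom Y Z" and X: "X \<in> Ob"
  shows "h \<cdot> zero X Y = zero X Z"
proof -
  have 0: "zero X Y \<in> hom X Y" and Z: "Z \<in> Ob" using X h hom_objects by blast+
  have "h \<cdot> zero X Y \<oplus> h \<cdot> zero X Y = zero X Z \<oplus> h \<cdot> zero X Y"
    using comp_add_left[OF 0 0 h] add_zero[OF 0] zero_add[OF comp_hom[OF 0 h]] by simp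
  then show ?thesis using add_right_cancel comp_hom[OF 0 h] zero_hom[OF X Z] by blast
qed

lemma zero_comp:
  assumes f: "f \<in> hom X Y" and Z: "Z \<in> Ob"
  shows "zero Y Z \<cdot> f = zero X Z"
proof -
  have 0: "zero Y Z \<in> hom Y Z" and X: "X \<in> Ob" using Z f hom_objects by blast+
  have "zero Y Z \<cdot> f \<oplus> zero Y Z \<cdot> f = zero X Z \<oplus> zero Y Z \<cdot> f"
    using comp_add_right[OF f 0 0] add_zero[OF 0] zero_add[OF comp_hom[OF f 0]] by simp
  then show ?thesis using add_right_cancel comp_hom[OF f 0] zero_hom[OF X Z] by blast
qed

lemma comp_neg_left:
  assumes f: "f \<in> hom X Y" and h: "h \<in> hom Y Z"
  shows "h \<cdot> \<ominus> f = \<ominus> (h \<cdot> f)"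
proof -
  have "h \<cdot> f \<oplus> h \<cdot> \<ominus> f = zero X Z"
    using comp_add_left[OF f neg_hom[OF f] h] add_neg[OF f] comp_zero[OF h] hom_objects[OF f]
    by simp
  then show ?thesis using neg_unique comp_hom f h by blast
qed

lemma comp_neg_right:
  assumes f: "f \<in> hom X Y" and h: "h \<in> hom Y Z"
  shows "\<ominus> h \<cdot> f = \<ominus> (h \<cdot> f)"
proof -
  have "h \<cdot> f \<oplus> \<ominus> h \<cdot> f = zero X Z"
    using comp_add_right[OF f h neg_hom[OF h]] add_neg[OF h] zero_comp[OF f] hom_objects[OF h]
    by simp
  then show ?thesis using neg_unique comp_hom f h by blast
qed

end

locale biproduct = preadditive_category +
  fixes X1 X2 S i1 i2 p1 p2
  assumes inj1: "i1 \<in> hom X1 S" and inj2: "i2 \<in> hom X2 S"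
    and proj1: "p1 \<in> hom S X1" and proj2: "p2 \<in> hom S X2"
    and proj1_inj1: "p1 \<cdot> i1 = ident X1" and proj2_inj2: "p2 \<cdot> i2 = ident X2"
    and proj1_inj2: "p1 \<cdot> i2 = zero X2 X1" and proj2_inj1: "p2 \<cdot> i1 = zero X1 X2"
    and inj_proj_sum: "i1 \<cdot> p1 \<oplus> i2 \<cdot> p2 = ident S"
begin

lemma copair_comp_inj1:
  assumes b1: "b1 \<in> hom X1 V" and b2: "b2 \<in> hom X2 V"
  shows "(b1 \<cdot> p1 \<oplus> b2 \<cdot> p2) \<cdot> i1 = b1"
proof -
  have "(b1 \<cdot> p1 \<oplus> b2 \<cdot> p2) \<cdot> i1 = (b1 \<cdot> p1) \<cdot> i1 \<oplus> (b2 \<cdot> p2) \<cdot> i1"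
    by (rule comp_add_right[OF inj1 comp_hom[OF proj1 b1] comp_hom[OF proj2 b2]])
  also have "\<dots> = b1 \<cdot> ident X1 \<oplus> b2 \<cdot> zero X1 X2"
    using comp_assoc[OF inj1 proj1 b1] comp_assoc[OF inj1 proj2 b2] proj1_inj1 proj2_inj1 by simp
  also have "\<dots> = b1"
    using ident_right[OF b1] comp_zero[OF b2] add_zero[OF b1] hom_objects[OF b1] by simp
  finally show ?thesis .
qed

lemma copair_comp_inj2:
  assumes b1: "b1 \<in> hom X1 V" and b2: "b2 \<in> hom X2 V"
  shows "(b1 \<cdot> p1 \<oplus> b2 \<cdot> p2) \<cdot> i2 = b2"
proof -
  have "(b1 \<cdot> p1 \<oplus> b2 \<cdot> p2) \<cdot> i2 = (b1 \<cdot> p1) \<cdot> i2 \<oplus> (b2 \<cdot> p2) \<cdot> i2"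
    by (rule comp_add_right[OF inj2 comp_hom[OF proj1 b1] comp_hom[OF proj2 b2]])
  also have "\<dots> = b1 \<cdot> zero X2 X1 \<oplus> b2 \<cdot> ident X2"
    using comp_assoc[OF inj2 proj1 b1] comp_assoc[OF inj2 proj2 b2] proj1_inj2 proj2_inj2 by simp
  also have "\<dots> = b2"
    using ident_right[OF b2] comp_zero[OF b1] zero_add[OF b2] hom_objects[OF b2] by simp
  finally show ?thesis .
qed

lemma proj1_comp_pair:
  assumes a1: "a1 \<in> hom W X1" and a2: "a2 \<in> hom W X2"
  shows "p1 \<cdot> (i1 \<cdot> a1 \<oplus> i2 \<cdot> a2) = a1"
proof -
  have "p1 \<cdot> (i1 \<cdot> a1 \<oplus> i2 \<cdot> a2) = p1 \<cdot> i1 \<cdot> a1 \<oplus> p1 \<cdot> i2 \<cdot> a2"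
    by (rule comp_add_left[OF comp_hom[OF a1 inj1] comp_hom[OF a2 inj2] proj1])
  also have "\<dots> = ident X1 \<cdot> a1 \<oplus> zero X2 X1 \<cdot> a2"
    using comp_assoc[OF a1 inj1 proj1] comp_assoc[OF a2 inj2 proj1] proj1_inj1 proj1_inj2 by simp
  also have "\<dots> = a1"
    using ident_left[OF a1] zero_comp[OF a2] add_zero[OF a1] hom_objects[OF a1] by simp
  finally show ?thesis .
qed

lemma proj2_comp_pair:
  assumes a1: "a1 \<in> hom W X1" and a2: "a2 \<in> hom W X2"
  shows "p2 \<cdot> (i1 \<cdot> a1 \<oplus> i2 \<cdot> a2) = a2"
proof -
  have "p2 \<cdot> (i1 \<cdot> a1 \<oplus> i2 \<cdot> a2) = p2 \<cdot> i1 \<cdot> a1 \<oplus> p2 \<cdot> i2 \<cdot> a2"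
    by (rule comp_add_left[OF comp_hom[OF a1 inj1] comp_hom[OF a2 inj2] proj2])
  also have "\<dots> = zero X1 X2 \<cdot> a1 \<oplus> ident X2 \<cdot> a2"
    using comp_assoc[OF a1 inj1 proj2] comp_assoc[OF a2 inj2 proj2] proj2_inj1 proj2_inj2 by simp
  also have "\<dots> = a2"
    using ident_left[OF a2] zero_comp[OF a1] zero_add[OF a2] hom_objects[OF a2] by simp
  finally show ?thesis .
qed

lemma copair_comp_pair:
  assumes a1: "a1 \<in> hom W X1" and a2: "a2 \<in> hom W X2"
    and b1: "b1 \<in> hom X1 V" and b2: "b2 \<in> hom X2 V"
  shows "(b1 \<cdot> p1 \<oplus> b2 \<cdot> p2) \<cdot> (i1 \<cdot> a1 \<oplus> i2 \<cdot> a2) = b1 \<cdot> a1 \<oplus> b2 \<cdot> a2"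
proof -
  have copair: "b1 \<cdot> p1 \<oplus> b2 \<cdot> p2 \<in> hom S V" using b1 b2 proj1 proj2 by blast
  have "(b1 \<cdot> p1 \<oplus> b2 \<cdot> p2) \<cdot> (i1 \<cdot> a1 \<oplus> i2 \<cdot> a2)
      = ((b1 \<cdot> p1 \<oplus> b2 \<cdot> p2) \<cdot> i1) \<cdot> a1 \<oplus> ((b1 \<cdot> p1 \<oplus> b2 \<cdot> p2) \<cdot> i2) \<cdot> a2"
    using comp_add_left[OF comp_hom[OF a1 inj1] comp_hom[OF a2 inj2] copair]
      comp_assoc[OF a1 inj1 copair] comp_assoc[OF a2 inj2 copair] by simp
  then show ?thesis using copair_comp_inj1[OF b1 b2] copair_comp_inj2[OF b1 b2] by simp
qed

lemma pair_proj_collapse: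
  assumes w: "w \<in> hom W S"
  shows "i1 \<cdot> p1 \<cdot> w \<oplus> i2 \<cdot> p2 \<cdot> w = w"
proof -
  have "i1 \<cdot> p1 \<cdot> w \<oplus> i2 \<cdot> p2 \<cdot> w = (i1 \<cdot> p1 \<oplus> i2 \<cdot> p2) \<cdot> w"
    using comp_add_right[OF w comp_hom[OF proj1 inj1] comp_hom[OF proj2 inj2]]
      comp_assoc[OF w proj1 inj1] comp_assoc[OF w proj2 inj2] by simp
  then show ?thesis using inj_proj_sum ident_left[OF w] by simp
qed


lemma difference_comp_pair_eq_zero_iff:
  assumes a: "a \<in> hom W X1" and c: "c \<in> hom W X2" and f: "f \<in> hom X1 Y" and b: "b \<in> hom X2 Y"
  shows "(f \<cdot> p1 \<oplus> \<ominus> b \<cdot> p2) \<cdot> (i1 \<cdot> a \<oplus> i2 \<cdot> c) = zero W Y \<longleftrightarrow> f \<cdot> a = b \<cdot> c"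
proof -
  have "(f \<cdot> p1 \<oplus> \<ominus> b \<cdot> p2) \<cdot> (i1 \<cdot> a \<oplus> i2 \<cdot> c) = f \<cdot> a \<oplus> \<ominus> (b \<cdot> c)"
    using copair_comp_pair[OF a c f neg_hom[OF b]] comp_neg_right[OF c b] by simp
  then show ?thesis
    using add_neg diff_eq_zero_imp_eq comp_hom[OF a f] comp_hom[OF c b] by metis
qed

lemma kernel_of_difference_is_pullback:
  assumes f: "f \<in> hom X1 Y" and b: "b \<in> hom X2 Y"
    and ker: "is_kernel C S Y (f \<cdot> p1 \<oplus> \<ominus> b \<cdot> p2) P k"
  shows "is_pullback C X1 Y X2 f b P (p1 \<cdot> k) (p2 \<cdot> k)"
  unfolding is_pullback_def
proof (intro conjI ballI impI)
  let ?\<phi> = "f \<cdot> p1 \<oplus> \<ominus> b \<cdot> p2"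
  have k: "k \<in> hom P S" and P: "P \<in> Ob" and \<phi>k: "?\<phi> \<cdot> k = zero P Y"
    and k_univ: "\<And>W w. W \<in> Ob \<Longrightarrow> w \<in> hom W S \<Longrightarrow> ?\<phi> \<cdot> w = zero W Y \<Longrightarrow>
                   \<exists>!v. v \<in> hom W P \<and> k \<cdot> v = w"
    using ker unfolding is_kernel_def by blast+
  have g: "p1 \<cdot> k \<in> hom P X1" and h: "p2 \<cdot> k \<in> hom P X2" using k proj1 proj2 by blast+
  show "f \<in> hom X1 Y" "b \<in> hom X2 Y" "P \<in> Ob" "p1 \<cdot> k \<in> hom P X1" "p2 \<cdot> k \<in> hom P X2"
    using f b P g h by blast+
  show "f \<cdot> p1 \<cdot> k = b \<cdot> p2 \<cdot> k"
    using \<phi>k pair_proj_collapse[OF k] difference_comp_pair_eq_zero_iff[OF g h f b] by simp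
  fix W a c assume W: "W \<in> Ob" and a: "a \<in> hom W X1" and c: "c \<in> hom W X2" and "f \<cdot> a = b \<cdot> c"
  then have "?\<phi> \<cdot> (i1 \<cdot> a \<oplus> i2 \<cdot> c) = zero W Y"
    using difference_comp_pair_eq_zero_iff[OF a c f b] by blast
  then obtain v where v: "v \<in> hom W P" "k \<cdot> v = i1 \<cdot> a \<oplus> i2 \<cdot> c"
    and v_unique: "\<And>v'. v' \<in> hom W P \<Longrightarrow> k \<cdot> v' = i1 \<cdot> a \<oplus> i2 \<cdot> c \<Longrightarrow> v' = v"
    using k_univ[OF W add_hom[OF comp_hom[OF a inj1] comp_hom[OF c inj2]]] by metis
  show "\<exists>!u. u \<in> hom W P \<and> (p1 \<cdot> k) \<cdot> u = a \<and> (p2 \<cdot> k) \<cdot> u = c"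
  proof (rule ex1I[of _ v])
    show "v \<in> hom W P \<and> (p1 \<cdot> k) \<cdot> v = a \<and> (p2 \<cdot> k) \<cdot> v = c"
      using v comp_assoc[OF v(1) k] proj1 proj2 proj1_comp_pair[OF a c] proj2_comp_pair[OF a c]
      by simp
  next
    fix v' assume v': "v' \<in> hom W P \<and> (p1 \<cdot> k) \<cdot> v' = a \<and> (p2 \<cdot> k) \<cdot> v' = c"
    then have "k \<cdot> v' = i1 \<cdot> a \<oplus> i2 \<cdot> c"
      using pair_proj_collapse[OF comp_hom[OF _ k], of v' W] comp_assoc[OF _ k proj1, of v' W]
        comp_assoc[OF _ k proj2, of v' W] by simp
    then show "v' = v" using v_unique v' by blast
  qed
qed
end

lemma (in preadditive_category) biproduct_if_is_biproduct:
  assumes "is_biproduct C X1 X2 S"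
  obtains i1 i2 p1 p2 where "biproduct C X1 X2 S i1 i2 p1 p2"
  using assms preadditive
  unfolding is_biproduct_def biproduct_def biproduct_axioms_def preadditive_category_def
  by blast

locale abelian_category =
  fixes C :: "('o, 'm) addcat"
  assumes abelian: "is_abelian C"

sublocale abelian_category \<subseteq> preadditive_category
  using abelian unfolding is_abelian_def by unfold_locales blast

context abelian_category
begin

lemma biproduct_exists: "X1 \<in> Ob \<Longrightarrow> X2 \<in> Ob \<Longrightarrow> \<exists>S. is_biproduct C X1 X2 S"
  using abelian unfolding is_abelian_def by blast

lemma kernel_exists: "f \<in> hom X Y \<Longrightarrow> \<exists>K k. is_kernel C X Y f K k"
  using abelian unfolding is_abelian_def by blast

lemma pullback_exists:
  assumes f: "f \<in> hom X Y" and b: "b \<in> hom T Y"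
  shows "\<exists>P g h. is_pullback C X Y T f b P g h"
proof -
  obtain S where "is_biproduct C X T S"
    using biproduct_exists f b hom_objects by blast
  then obtain i1 i2 p1 p2 where "biproduct C X T S i1 i2 p1 p2"
    by (rule biproduct_if_is_biproduct)
  then interpret biproduct C X T S i1 i2 p1 p2 .
  obtain P k where "is_kernel C S Y (f \<cdot> p1 \<oplus> \<ominus> b \<cdot> p2) P k"
    using kernel_exists f b proj1 proj2 by blast
  then show ?thesis using kernel_of_difference_is_pullback[OF f b] by blast
qed

end

locale stable_category = abelian_category +
  fixes TT
  assumes good_subcat: "good_subcat C TT"
begin

abbreviation factors where "factors \<equiv> factors_through C TT"
abbreviation steq where "steq \<equiv> st_eq C TT"

lemma subcat_objects: "T \<in> TT \<Longrightarrow> T \<in> Ob"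
  using good_subcat unfolding good_subcat_def by blast

lemma factors_through_hom: "factors X Y f \<Longrightarrow> f \<in> hom X Y"
  unfolding factors_through_def by blast

lemma factors_throughI: "T \<in> TT \<Longrightarrow> a \<in> hom X T \<Longrightarrow> b \<in> hom T Y \<Longrightarrow> factors X Y (b \<cdot> a)"
  unfolding factors_through_def by blast

lemma factors_through_zero:
  assumes X: "X \<in> Ob" and Y: "Y \<in> Ob"
  shows "factors X Y (zero X Y)"
proof -
  obtain N where N: "N \<in> TT" using good_subcat unfolding good_subcat_def by blast
  then have "zero N Y \<cdot> zero X N = zero X Y" using zero_comp X Y subcat_objects by blast
  then show ?thesis using factors_throughI[OF N] X Y N subcat_objects by (metis zero_hom)
qed

lemma factors_through_comp_left:
  assumes "factors X Y f" and h: "h \<in> hom Y Z"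
  shows "factors X Z (h \<cdot> f)"
proof -
  obtain T a b where "T \<in> TT" "a \<in> hom X T" "b \<in> hom T Y" "f = b \<cdot> a"
    using assms(1) unfolding factors_through_def by blast
  then show ?thesis using factors_throughI[of T a X "h \<cdot> b"] comp_assoc h by auto
qed

lemma factors_through_comp_right:
  assumes "factors X Y f" and h: "h \<in> hom W X"
  shows "factors W Y (f \<cdot> h)"
proof -
  obtain T a b where "T \<in> TT" "a \<in> hom X T" "b \<in> hom T Y" "f = b \<cdot> a"
    using assms(1) unfolding factors_through_def by blast
  then show ?thesis using factors_throughI[of T "a \<cdot> h" W b] comp_assoc h by auto
qed

lemma factors_through_neg:
  assumes "factors X Y f"
  shows "factors X Y (\<ominus> f)"
proof -
  obtain T a b where "T \<in> TT" "a \<in> hom X T" "b \<in> hom T Y" "f = b \<cdot> a"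
    using assms unfolding factors_through_def by blast
  then show ?thesis using factors_throughI[of T a X "\<ominus> b"] comp_neg_right by auto
qed

lemma factors_through_add:
  assumes "factors X Y f" and "factors X Y g"
  shows "factors X Y (f \<oplus> g)"
proof -
  obtain T1 a1 b1 where T1: "T1 \<in> TT" and a1: "a1 \<in> hom X T1" and b1: "b1 \<in> hom T1 Y"
    and f: "f = b1 \<cdot> a1"
    using assms(1) unfolding factors_through_def by blast
  obtain T2 a2 b2 where T2: "T2 \<in> TT" and a2: "a2 \<in> hom X T2" and b2: "b2 \<in> hom T2 Y"
    and g: "g = b2 \<cdot> a2"
    using assms(2) unfolding factors_through_def by blast
  obtain S where S: "is_biproduct C T1 T2 S"
    using biproduct_exists subcat_objects T1 T2 by blast
  then have "S \<in> TT" using good_subcat T1 T2 unfolding good_subcat_def by blast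
  obtain i1 i2 p1 p2 where "biproduct C T1 T2 S i1 i2 p1 p2"
    using S by (rule biproduct_if_is_biproduct)
  then interpret biproduct C T1 T2 S i1 i2 p1 p2 .
  have "f \<oplus> g = (b1 \<cdot> p1 \<oplus> b2 \<cdot> p2) \<cdot> (i1 \<cdot> a1 \<oplus> i2 \<cdot> a2)"
    using copair_comp_pair[OF a1 a2 b1 b2] f g by simp
  moreover have "i1 \<cdot> a1 \<oplus> i2 \<cdot> a2 \<in> hom X S" and "b1 \<cdot> p1 \<oplus> b2 \<cdot> p2 \<in> hom S Y"
    using a1 a2 b1 b2 inj1 inj2 proj1 proj2 by blast+
  ultimately show ?thesis using factors_throughI[OF \<open>S \<in> TT\<close>] by simp
qed

lemma st_eq_refl: "f \<in> hom X Y \<Longrightarrow> steq X Y f f"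
  unfolding st_eq_def using add_neg factors_through_zero hom_objects by metis

lemma st_eq_sym:
  assumes "steq X Y f g"
  shows "steq X Y g f"
proof -
  have f: "f \<in> hom X Y" and g: "g \<in> hom X Y" and "factors X Y (f \<oplus> \<ominus> g)"
    using assms unfolding st_eq_def by blast+
  moreover have "\<ominus> (f \<oplus> \<ominus> g) = g \<oplus> \<ominus> f"
    using neg_add_distrib[OF f neg_hom[OF g]] neg_neg[OF g] add_commute[OF neg_hom[OF f] g] by simp
  ultimately show ?thesis unfolding st_eq_def using factors_through_neg by metis
qed

lemma st_eq_trans:
  assumes "steq X Y f g" and "steq X Y g h"
  shows "steq X Y f h"
proof -
  have f: "f \<in> hom X Y" and g: "g \<in> hom X Y" and h: "h \<in> hom X Y"
    and "factors X Y (f \<oplus> \<ominus> g)" and "factors X Y (g \<oplus> \<ominus> h)"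
    using assms unfolding st_eq_def by blast+
  moreover have "(f \<oplus> \<ominus> g) \<oplus> (g \<oplus> \<ominus> h) = f \<oplus> \<ominus> h"
    using add_assoc[OF f neg_hom[OF g] add_hom[OF g neg_hom[OF h]]]
      add_assoc[OF neg_hom[OF g] g neg_hom[OF h]]
      neg_add[OF g] zero_add[OF neg_hom[OF h]] by simp
  ultimately show ?thesis unfolding st_eq_def using factors_through_add by metis
qed

lemma st_eq_zero_iff: "f \<in> hom X Y \<Longrightarrow> steq X Y f (zero X Y) \<longleftrightarrow> factors X Y f"
  unfolding st_eq_def using neg_zero add_zero zero_hom hom_objects by metis

lemma st_eq_comp_left:
  assumes "steq X Y f g" and h: "h \<in> hom Y Z"
  shows "steq X Z (h \<cdot> f) (h \<cdot> g)"
proof -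
  have f: "f \<in> hom X Y" and g: "g \<in> hom X Y" and "factors X Y (f \<oplus> \<ominus> g)"
    using assms(1) unfolding st_eq_def by blast+
  moreover have "h \<cdot> (f \<oplus> \<ominus> g) = h \<cdot> f \<oplus> \<ominus> (h \<cdot> g)"
    using comp_add_left[OF f neg_hom[OF g] h] comp_neg_left[OF g h] by simp
  ultimately show ?thesis unfolding st_eq_def using factors_through_comp_left h by (metis comp_hom)
qed

lemma st_eq_comp_right:
  assumes "steq X Y f g" and h: "h \<in> hom W X"
  shows "steq W Y (f \<cdot> h) (g \<cdot> h)"
proof -
  have f: "f \<in> hom X Y" and g: "g \<in> hom X Y" and "factors X Y (f \<oplus> \<ominus> g)"
    using assms(1) unfolding st_eq_def by blast+
  moreover have "(f \<oplus> \<ominus> g) \<cdot> h = f \<cdot> h \<oplus> \<ominus> (g \<cdot> h)"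
    using comp_add_right[OF h f neg_hom[OF g]] comp_neg_right[OF h g] by simp
  ultimately show ?thesis unfolding st_eq_def using factors_through_comp_right h by (metis comp_hom)
qed

lemma factors_through_st_eq: "steq X Y f g \<Longrightarrow> factors X Y g \<Longrightarrow> factors X Y f"
  using st_eq_trans st_eq_zero_iff unfolding st_eq_def by metis

lemma stable_iso_ident: "X \<in> Ob \<Longrightarrow> stable_iso C TT X X (ident X)"
  unfolding stable_iso_def using ident_hom ident_left st_eq_refl by metis

lemma stable_mono_iff_reflects_factoring:
  "stable_mono C TT X Y f \<longleftrightarrow>
     f \<in> hom X Y \<and> (\<forall>W \<in> Ob. \<forall>d \<in> hom W X. factors W Y (f \<cdot> d) \<longrightarrow> factors W X d)"
proof (intro iffI conjI ballI impI)
  assume mono: "stable_mono C TT X Y f"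
  then show f: "f \<in> hom X Y" unfolding stable_mono_def by blast
  fix W d assume W: "W \<in> Ob" and d: "d \<in> hom W X" and "factors W Y (f \<cdot> d)"
  then have "steq W Y (f \<cdot> d) (f \<cdot> zero W X)"
    using st_eq_zero_iff comp_hom comp_zero[OF f W] f by metis
  then have "steq W X d (zero W X)"
    using mono W d zero_hom hom_objects[OF f] unfolding stable_mono_def by blast
  then show "factors W X d" using st_eq_zero_iff[OF d] by blast
next
  assume "f \<in> hom X Y \<and> (\<forall>W \<in> Ob. \<forall>d \<in> hom W X. factors W Y (f \<cdot> d) \<longrightarrow> factors W X d)"
  then have f: "f \<in> hom X Y"
    and reflect: "\<And>W d. W \<in> Ob \<Longrightarrow> d \<in> hom W X \<Longrightarrow> factors W Y (f \<cdot> d) \<Longrightarrow> factors W X d"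
    by blast+
  show "stable_mono C TT X Y f" unfolding stable_mono_def
  proof (intro conjI ballI impI f)
    fix W u v assume W: "W \<in> Ob" and u: "u \<in> hom W X" and v: "v \<in> hom W X"
      and "steq W Y (f \<cdot> u) (f \<cdot> v)"
    moreover have "f \<cdot> (u \<oplus> \<ominus> v) = f \<cdot> u \<oplus> \<ominus> (f \<cdot> v)"
      using comp_add_left[OF u neg_hom[OF v] f] comp_neg_left[OF v f] by simp
    ultimately have "factors W Y (f \<cdot> (u \<oplus> \<ominus> v))" unfolding st_eq_def by simp
    then show "steq W X u v" unfolding st_eq_def using reflect W u v by blast
  qed
qed

lemma factors_through_if_lifts_to_pullback:
  assumes pb: "is_pullback C X Y P f p Z g h" and g: "factors Z X g"
    and d: "d \<in> hom W X" and s: "s \<in> hom W P" and lift: "f \<cdot> d = p \<cdot> s"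
  shows "factors W X d"
proof -
  obtain w where "w \<in> hom W Z" "g \<cdot> w = d"
    using pb d s lift hom_objects[OF d] unfolding is_pullback_def by blast
  then show ?thesis using factors_through_comp_right[OF g] by metis
qed

lemma pullback_projection_factors_through:
  assumes mono: "stable_mono C TT X Y f" and pb: "is_pullback C X Y T f p Z g h" and T: "T \<in> TT"
  shows "factors Z X g"
proof -
  have "Z \<in> Ob" "g \<in> hom Z X" "h \<in> hom Z T" "p \<in> hom T Y" "f \<cdot> g = p \<cdot> h"
    using pb unfolding is_pullback_def by blast+
  then show ?thesis
    using mono factors_throughI[OF T] unfolding stable_mono_iff_reflects_factoring by metis
qed

lemma stable_mono_iff_pullback_projections_factor:
  assumes f: "f \<in> hom X Y"
  shows "stable_mono C TT X Y f \<longleftrightarrow>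
    (\<forall>T \<in> TT. \<forall>p \<in> hom T Y. \<forall>Z g h. is_pullback C X Y T f p Z g h \<longrightarrow> factors Z X g)"
proof (intro iffI)
  assume "stable_mono C TT X Y f"
  then show "\<forall>T \<in> TT. \<forall>p \<in> hom T Y. \<forall>Z g h. is_pullback C X Y T f p Z g h \<longrightarrow> factors Z X g"
    using pullback_projection_factors_through by blast
next
  assume projections: "\<forall>T \<in> TT. \<forall>p \<in> hom T Y. \<forall>Z g h. is_pullback C X Y T f p Z g h \<longrightarrow> factors Z X g"
  show "stable_mono C TT X Y f" unfolding stable_mono_iff_reflects_factoring
  proof (intro conjI ballI impI f)
    fix W d assume d: "d \<in> hom W X" and "factors W Y (f \<cdot> d)"
    then obtain T a b where "T \<in> TT" "a \<in> hom W T" "b \<in> hom T Y" "f \<cdot> d = b \<cdot> a"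
      unfolding factors_through_def by blast
    moreover obtain Z g h where "is_pullback C X Y T f b Z g h"
      using pullback_exists[OF f \<open>b \<in> hom T Y\<close>] by blast
    ultimately show "factors W X d"
      using factors_through_if_lifts_to_pullback d projections by blast
  qed
qed

lemma stable_mono_if_precover_pullback_projection_factors:
  assumes cover: "is_precover C TT Y TY p" and pb: "is_pullback C X Y TY f p Z g h"
    and g: "factors Z X g"
  shows "stable_mono C TT X Y f"
  unfolding stable_mono_iff_reflects_factoring
proof (intro conjI ballI impI)
  show "f \<in> hom X Y" using pb unfolding is_pullback_def by blast
  fix W d assume d: "d \<in> hom W X" and "factors W Y (f \<cdot> d)"
  then obtain T a b where "T \<in> TT" and a: "a \<in> hom W T" and "b \<in> hom T Y" and fd: "f \<cdot> d = b \<cdot> a"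
    unfolding factors_through_def by blast
  then obtain r where r: "r \<in> hom T TY" and "p \<cdot> r = b"
    using cover unfolding is_precover_def by blast
  then have "f \<cdot> d = p \<cdot> r \<cdot> a" using fd comp_assoc[OF a r] cover unfolding is_precover_def by auto
  then show "factors W X d"
    using factors_through_if_lifts_to_pullback[OF pb g d comp_hom[OF a r]] by blast
qed

lemma stable_mono_iff_precover_pullback_projections_factor:
  assumes f: "f \<in> hom X Y" and cover: "is_precover C TT Y TY p"
  shows "stable_mono C TT X Y f \<longleftrightarrow>
    (\<forall>Z g h. is_pullback C X Y TY f p Z g h \<longrightarrow> factors Z X g)"
proof -
  have p: "p \<in> hom TY Y" and TY: "TY \<in> TT" using cover unfolding is_precover_def by blast+
  obtain Z g h where "is_pullback C X Y TY f p Z g h" using pullback_exists[OF f p] by blast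
  then show ?thesis
    using pullback_projection_factors_through[OF _ _ TY]
      stable_mono_if_precover_pullback_projection_factors[OF cover] by blast
qed

lemma stable_mono_if_stable_iso_square:
  assumes mono: "stable_mono C TT X' Y' f'" and iso: "stable_iso C TT X X' a"
    and b: "b \<in> hom Y Y'" and f: "f \<in> hom X Y" and square: "steq X Y' (f' \<cdot> a) (b \<cdot> f)"
  shows "stable_mono C TT X Y f"
  unfolding stable_mono_iff_reflects_factoring
proof (intro conjI ballI impI f)
  obtain a' where a: "a \<in> hom X X'" and a': "a' \<in> hom X' X" and a'a: "steq X X (a' \<cdot> a) (ident X)"
    using iso unfolding stable_iso_def by blast
  have f': "f' \<in> hom X' Y'" using mono unfolding stable_mono_def by blast
  fix W d assume W: "W \<in> Ob" and d: "d \<in> hom W X" and "factors W Y (f \<cdot> d)"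
  then have "factors W Y' (b \<cdot> f \<cdot> d)" using factors_through_comp_left b by blast
  moreover have "steq W Y' (f' \<cdot> a \<cdot> d) (b \<cdot> f \<cdot> d)"
    using st_eq_comp_right[OF square d] comp_assoc[OF d a f'] comp_assoc[OF d f b] by simp
  ultimately have "factors W Y' (f' \<cdot> a \<cdot> d)" using factors_through_st_eq by blast
  then have "factors W X (a' \<cdot> a \<cdot> d)"
    using mono W comp_hom[OF d a] factors_through_comp_left[OF _ a']
    unfolding stable_mono_iff_reflects_factoring by blast
  moreover have "steq W X d (a' \<cdot> a \<cdot> d)"
    using st_eq_sym[OF st_eq_comp_right[OF a'a d]] comp_assoc[OF d a a'] ident_left[OF d] by simp
  ultimately show "factors W X d" using factors_through_st_eq by blast
qed

lemma factors_through_if_stable_iso_comp: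
  assumes iso: "stable_iso C TT Z Z' a" and g: "g \<in> hom Z' X" and ga: "factors Z X (g \<cdot> a)"
  shows "factors Z' X g"
proof -
  obtain a' where a: "a \<in> hom Z Z'" and a': "a' \<in> hom Z' Z"
    and aa': "steq Z' Z' (a \<cdot> a') (ident Z')"
    using iso unfolding stable_iso_def by blast
  have "steq Z' X g (g \<cdot> a \<cdot> a')"
    using st_eq_sym[OF st_eq_comp_left[OF aa' g]] ident_right[OF g] by simp
  moreover have "factors Z' X (g \<cdot> a \<cdot> a')"
    using factors_through_comp_right[OF ga a'] comp_assoc[OF a' a g] by simp
  ultimately show ?thesis using factors_through_st_eq by blast
qed

lemma stable_mono_if_left_triangle_zero:
  assumes "left_triangle C TT K Z X Y u (zero Z X) f"
  shows "stable_mono C TT X Y f"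
proof -
  obtain K' Z' X' Y' u' g' f' a2 a3 a4 where std: "std_left_triangle C TT K' Z' X' Y' u' g' f'"
    and iso: "stable_iso C TT Z Z' a2" "stable_iso C TT X X' a3" "stable_iso C TT Y Y' a4"
    and square2: "steq Z X' (g' \<cdot> a2) (a3 \<cdot> zero Z X)" and square3: "steq X Y' (f' \<cdot> a3) (a4 \<cdot> f)"
    and f: "f \<in> hom X Y" and Z: "Z \<in> Ob"
    using assms hom_objects unfolding left_triangle_def by metis
  obtain TY p h where cover: "is_precover C TT Y' TY p"
    and pb: "is_pullback C X' Y' TY f' p Z' g' h"
    using std unfolding std_left_triangle_def by blast
  have g': "g' \<in> hom Z' X'" and a3: "a3 \<in> hom X X'" and a4: "a4 \<in> hom Y Y'"
    using pb iso unfolding is_pullback_def stable_iso_def by blast+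
  have "factors Z X' (g' \<cdot> a2)"
    using square2 comp_zero[OF a3 Z] st_eq_zero_iff unfolding st_eq_def by metis
  then have "factors Z' X' g'" using factors_through_if_stable_iso_comp[OF iso(1) g'] by blast
  then have "stable_mono C TT X' Y' f'"
    using stable_mono_if_precover_pullback_projection_factors[OF cover pb] by blast
  then show ?thesis using stable_mono_if_stable_iso_square[OF _ iso(2) a4 f square3] by blast
qed

lemma left_triangle_if_std_left_triangle:
  assumes std: "std_left_triangle C TT K Z X Y u g f" and g: "steq Z X g g'"
  shows "left_triangle C TT K Z X Y u g' f"
proof -
  obtain TY p k h where "is_kernel C TY Y p K k" "is_pullback C X Y TY f p Z g h" "u \<in> hom K Z"
    using std unfolding std_left_triangle_def by blast
  then have u: "u \<in> hom K Z" and f: "f \<in> hom X Y" and g': "g' \<in> hom Z X" and K: "K \<in> Ob"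
    using g unfolding is_kernel_def is_pullback_def st_eq_def by blast+
  then have Z: "Z \<in> Ob" and X: "X \<in> Ob" and Y: "Y \<in> Ob" using hom_objects by blast+
  show ?thesis unfolding left_triangle_def
  proof (intro conjI exI)
    show "std_left_triangle C TT K Z X Y u g f" by (rule std)
    show "stable_iso C TT K K (ident K)" "stable_iso C TT Z Z (ident Z)"
      "stable_iso C TT X X (ident X)" "stable_iso C TT Y Y (ident Y)"
      using stable_iso_ident K Z X Y by blast+
    show "steq K Z (u \<cdot> ident K) (ident Z \<cdot> u)"
      using st_eq_refl[OF u] ident_left[OF u] ident_right[OF u] by simp
    show "steq Z X (g \<cdot> ident Z) (ident X \<cdot> g')"
      using g ident_left[OF g'] ident_right[of g Z X] unfolding st_eq_def by simp
    show "steq X Y (f \<cdot> ident X) (ident Y \<cdot> f)"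
      using st_eq_refl[OF f] ident_left[OF f] ident_right[OF f] by simp
  qed (use u g' f in auto)
qed

lemma std_left_triangle_exists:
  assumes cover: "is_precover C TT Y TY p" and ker: "is_kernel C TY Y p K k" and f: "f \<in> hom X Y"
  obtains Z u g h where "std_left_triangle C TT K Z X Y u g f" "is_pullback C X Y TY f p Z g h"
    "Z \<in> Ob" "u \<in> hom K Z"
proof -
  have p: "p \<in> hom TY Y" and k: "k \<in> hom K TY" and K: "K \<in> Ob" and pk: "p \<cdot> k = zero K Y"
    using cover ker unfolding is_precover_def is_kernel_def by blast+
  obtain Z g h where pb: "is_pullback C X Y TY f p Z g h" using pullback_exists[OF f p] by blast
  moreover have "f \<cdot> zero K X = p \<cdot> k" using comp_zero[OF f K] pk by simp
  ultimately obtain u where "u \<in> hom K Z" "g \<cdot> u = zero K X" "h \<cdot> u = k"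
    using K k hom_objects[OF f] unfolding is_pullback_def by (metis zero_hom)
  then show ?thesis
    using that[of Z u g h] cover ker pb unfolding std_left_triangle_def is_pullback_def by blast
qed

lemma stable_mono_iff_left_triangle_zero:
  assumes f: "f \<in> hom X Y" and cover: "is_precover C TT Y TY p" and ker: "is_kernel C TY Y p K k"
  shows "stable_mono C TT X Y f \<longleftrightarrow>
    (\<exists>Z u. Z \<in> Ob \<and> u \<in> hom K Z \<and> left_triangle C TT K Z X Y u (zero Z X) f)"
proof (intro iffI)
  assume mono: "stable_mono C TT X Y f"
  obtain Z u g h where std: "std_left_triangle C TT K Z X Y u g f"
    and pb: "is_pullback C X Y TY f p Z g h" and "Z \<in> Ob" "u \<in> hom K Z"
    using std_left_triangle_exists[OF cover ker f] by blast
  moreover have "factors Z X g"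
    using pullback_projection_factors_through[OF mono pb] cover unfolding is_precover_def by blast
  then have "steq Z X g (zero Z X)" using st_eq_zero_iff factors_through_hom by blast
  ultimately show "\<exists>Z u. Z \<in> Ob \<and> u \<in> hom K Z \<and> left_triangle C TT K Z X Y u (zero Z X) f"
    using left_triangle_if_std_left_triangle by blast
qed (use stable_mono_if_left_triangle_zero in blast)

end

theorem proposition2p1:
  fixes C :: "('o, 'm) addcat" and TT :: "'o set"
    and X Y :: 'o and f :: 'm
  assumes "is_abelian C"
    and "good_subcat C TT"
    and "X \<in> c_ob C" and "Y \<in> c_ob C"
    and "f \<in> c_hom C X Y"
  shows "(stable_mono C TT X Y f \<longleftrightarrow>
           (\<forall>T \<in> TT. \<forall>p \<in> c_hom C T Y. \<forall>Z g h.
              is_pullback C X Y T f p Z g h \<longrightarrow> factors_through C TT Z X g))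
       \<and> (contravariantly_finite C TT \<longrightarrow>
           (stable_mono C TT X Y f \<longleftrightarrow>
              (\<exists>TY p. is_precover C TT Y TY p \<and>
                 (\<forall>Z g h. is_pullback C X Y TY f p Z g h \<longrightarrow> factors_through C TT Z X g)))
         \<and> (stable_mono C TT X Y f \<longleftrightarrow>
              (\<exists>TY p K k Z u. is_precover C TT Y TY p \<and> is_kernel C TY Y p K k \<and>
                 Z \<in> c_ob C \<and> u \<in> c_hom C K Z \<and>
                 left_triangle C TT K Z X Y u (c_zero C Z X) f)))"
proof -
  interpret stable_category C TT
    using assms(1,2) by unfold_locales
  have f: "f \<in> hom X Y" by (rule assms(5))
  have "(stable_mono C TT X Y f \<longleftrightarrow> (\<exists>TY p. is_precover C TT Y TY p \<and>
         (\<forall>Z g h. is_pullback C X Y TY f p Z g h \<longrightarrow> factors Z X g)))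
    \<and> (stable_mono C TT X Y f \<longleftrightarrow> (\<exists>TY p K k Z u. is_precover C TT Y TY p \<and> is_kernel C TY Y p K k \<and>
         Z \<in> Ob \<and> u \<in> hom K Z \<and> left_triangle C TT K Z X Y u (zero Z X) f))"
    if cf: "contravariantly_finite C TT"
  proof -
    obtain TY p where cover: "is_precover C TT Y TY p"
      using cf assms(4) unfolding contravariantly_finite_def by blast
    then obtain K k where ker: "is_kernel C TY Y p K k"
      using kernel_exists unfolding is_precover_def by blast
    show ?thesis
      using stable_mono_iff_precover_pullback_projections_factor[OF f]
        stable_mono_iff_left_triangle_zero[OF f] cover ker by meson
  qed
  then show ?thesis using stable_mono_iff_pullback_projections_factor[OF f] by blast
qed

end
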